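(* Let $f:\mathbb{N}_0^n\to[0,\infty)$ be subadditive, and extend it to $\mathbb{R}_0^n=[0,\infty)^n$ by $f(\boldsymbol r)=f(\lceil\boldsymbol r\rceil)$ (ceiling taken coordinatewise). Then for every $\boldsymbol r\in\mathbb{R}_0^n$ the limit $\hat f(\boldsymbol r)=\lim_{t\to\infty}f(t\boldsymbol r)/t$ (over real $t\to\infty$) exists and is finite, and $\hat f$ is positively homogeneous: $\hat f(\alpha\boldsymbol r)=\alpha\hat f(\boldsymbol r)$ for all $\alpha\ge0$.
   Context: A function $f:\mathbb{N}_0^n\to[0,\infty)$ is subadditive if $f(\boldsymbol k+\boldsymbol m)\le f(\boldsymbol k)+f(\boldsymbol m)$ for all $\boldsymbol k,\boldsymbol m\in\mathbb{N}_0^n$. *)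

theory Defs
  imports "HOL-Analysis.Analysis"
begin

text \<open>Vectors in N_0^n and R^n are modelled as nat^'n and real^'n for a finite index type 'n.\<close>

definition subadditive :: "(nat^'n \<Rightarrow> real) \<Rightarrow> bool" where
  "subadditive f \<longleftrightarrow> (\<forall>k m. f (k + m) \<le> f k + f m)"

definition ceil_ext :: "(nat^'n \<Rightarrow> real) \<Rightarrow> real^'n \<Rightarrow> real" where
  "ceil_ext f r = f (\<chi> i. nat \<lceil>r $ i\<rceil>)"

definition fhat :: "(nat^'n \<Rightarrow> real) \<Rightarrow> real^'n \<Rightarrow> real" where
  "fhat f r = Lim at_top (\<lambda>t::real. ceil_ext f (t *\<^sub>R r) / t)"

end

theory Submission imports Defs begin

text \<open>
  Proof idea (a continuous-parameter variant of Fekete's lemma).  Write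
  \<open>\<lceil>t r\<rceil>\<close> for the coordinatewise ceiling and \<open>h(t) = f(\<lceil>t r\<rceil>)/t\<close>.
  For real \<open>T, s \<ge> 1\<close> put \<open>c = s + 1/\<rho>\<close>, where \<open>\<rho>\<close> is the least positive
  coordinate of \<open>r\<close>, and \<open>q = \<lfloor>T/c\<rfloor>\<close>.  Then \<open>\<lceil>T r\<rceil> = q \<lceil>s r\<rceil> + m\<close> with a
  remainder \<open>m \<in> \<nat>\<^sub>0\<^sup>n\<close> whose coordinates are \<open>O(T/s + s)\<close>.  Subadditivity bounds
  \<open>f(q a + m) \<le> q f(a) + f(m)\<close> and \<open>f(m) \<le> f(0) + \<Sum>\<^sub>i m\<^sub>i f(e\<^sub>i)\<close>, which yields
  the approximate monotonicity \<open>h(T) \<le> h(s) + A/s + B(s)/T\<close>.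
  A general real-analysis lemma turns this into convergence of \<open>h\<close> to
  \<open>inf\<^sub>s (h(s) + A/s)\<close>.  Homogeneity of the limit follows by the substitution
  \<open>t \<mapsto> \<alpha> t\<close> for \<open>\<alpha> > 0\<close>, and trivially for \<open>\<alpha> = 0\<close>.
\<close>

lemma subadditive_scale:
  fixes f :: "nat^'n \<Rightarrow> real"
  assumes "subadditive f"
  shows "f (q *s a + m) \<le> real q * f a + f m"
proof (induction q)
  case 0
  then show ?case by (simp add: vec_eq_iff)
next
  case (Suc q)
  have "Suc q *s a + m = a + (q *s a + m)" by (simp add: vec_eq_iff)
  then have "f (Suc q *s a + m) \<le> f a + f (q *s a + m)"
    using assms unfolding subadditive_def by metis
  then show ?case using Suc by (simp add: algebra_simps)
qed

lemma subadditive_linear_bound_on: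
  fixes f :: "nat^'n \<Rightarrow> real"
  assumes "subadditive f" and "finite S"
  shows "f (\<chi> j. if j \<in> S then m$j else 0) \<le> f 0 + (\<Sum>i\<in>S. real (m$i) * f (axis i 1))"
  using assms(2)
proof (induction S rule: finite_induct)
  case empty
  then show ?case by (simp add: zero_vec_def)
next
  case (insert x S)
  have "f (\<chi> j. if j \<in> insert x S then m$j else 0)
        = f ((m$x) *s axis x 1 + (\<chi> j. if j \<in> S then m$j else 0))"
    using insert.hyps(2) by (auto simp: vec_eq_iff axis_def intro: arg_cong[where f = f])
  also have "\<dots> \<le> real (m$x) * f (axis x 1) + f (\<chi> j. if j \<in> S then m$j else 0)"
    by (rule subadditive_scale[OF assms(1)])
  also have "\<dots> \<le> real (m$x) * f (axis x 1) + (f 0 + (\<Sum>i\<in>S. real (m$i) * f (axis i 1)))"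
    using insert.IH by simp
  also have "\<dots> = f 0 + (\<Sum>i\<in>insert x S. real (m$i) * f (axis i 1))"
    using insert.hyps by simp
  finally show ?case .
qed

lemma subadditive_uniform_bound:
  fixes f :: "nat^'n \<Rightarrow> real"
  assumes "subadditive f" and "\<And>k. f k \<ge> 0" and "\<And>i. real (m$i) \<le> M"
  shows "f m \<le> f 0 + M * (\<Sum>i\<in>UNIV. f (axis i 1))"
proof -
  have "f m \<le> f 0 + (\<Sum>i\<in>UNIV. real (m$i) * f (axis i 1))"
    using subadditive_linear_bound_on[OF assms(1), of UNIV m] by simp
  also have "(\<Sum>i\<in>UNIV. real (m$i) * f (axis i 1)) \<le> (\<Sum>i\<in>UNIV. M * f (axis i 1))"
    by (rule sum_mono) (simp add: assms(2,3) mult_right_mono)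
  finally show ?thesis by (simp add: sum_distrib_left)
qed

definition ceil_vec :: "real \<Rightarrow> real^'n \<Rightarrow> nat^'n" where
  "ceil_vec t r = (\<chi> i. nat \<lceil>t * r$i\<rceil>)"

lemma ceil_ext_scaleR: "ceil_ext f (t *\<^sub>R r) = f (ceil_vec t r)"
  by (simp add: ceil_ext_def ceil_vec_def)

text \<open>One coordinate of the decomposition \<open>\<lceil>T v\<rceil> = q \<lceil>s v\<rceil> + m\<close> for \<open>v \<ge> \<rho>\<close>: with
  \<open>c = s + 1/\<rho>\<close> and \<open>q = \<lfloor>T/c\<rfloor>\<close> the remainder is nonnegative (because
  \<open>\<lceil>s v\<rceil> \<le> s v + 1 \<le> c v\<close>) and of size \<open>O(T/s + s)\<close>.\<close>
lemma ceiling_division_pos: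
  fixes s T \<rho> v R :: real
  assumes s: "s \<ge> 1" and T: "T \<ge> 1" and rho: "\<rho> > 0" and rv: "\<rho> \<le> v" and vR: "v \<le> R"
  defines "c \<equiv> s + 1/\<rho>"
  defines "q \<equiv> nat \<lfloor>T/c\<rfloor>"
  shows "q * nat \<lceil>s * v\<rceil> \<le> nat \<lceil>T * v\<rceil>"
    and "real (nat \<lceil>T * v\<rceil> - q * nat \<lceil>s * v\<rceil>) \<le> T*R/(\<rho> * s) + 1 + s*R"
proof -
  have v: "v > 0" using rho rv by simp
  have cpos: "c > 0" "c \<ge> s" using s rho unfolding c_def by (simp_all add: add_pos_pos)
  have "real q = \<lfloor>T/c\<rfloor>" using cpos T unfolding q_def by simp
  then have q: "real q \<le> T/c" "T/c - 1 < real q" "real q \<ge> 0" by linarith+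
  have sv: "s * v \<le> real (nat \<lceil>s * v\<rceil>)" "real (nat \<lceil>s * v\<rceil>) < s * v + 1"
    using s v by (simp_all, linarith+)
  have Tv: "T * v \<le> real (nat \<lceil>T * v\<rceil>)" "real (nat \<lceil>T * v\<rceil>) < T * v + 1"
    using T v by (simp_all, linarith+)
  have "s * v + 1 \<le> v * c" using rv rho by (simp add: c_def field_simps)
  then have "real q * real (nat \<lceil>s * v\<rceil>) \<le> (T/c) * (v * c)"
    using q sv by (intro mult_mono) auto
  also have "\<dots> = T * v" using cpos by simp
  finally have "real q * real (nat \<lceil>s * v\<rceil>) \<le> real (nat \<lceil>T * v\<rceil>)"
    using Tv(1) by linarith
  then show le: "q * nat \<lceil>s * v\<rceil> \<le> nat \<lceil>T * v\<rceil>"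
    by (simp only: of_nat_mult[symmetric] of_nat_le_iff)
  have "real (nat \<lceil>T * v\<rceil> - q * nat \<lceil>s * v\<rceil>) = real (nat \<lceil>T * v\<rceil>) - real q * real (nat \<lceil>s * v\<rceil>)"
    using le by (simp add: of_nat_diff)
  also have "\<dots> \<le> T * v + 1 - (T/c - 1) * (s * v)"
    using Tv sv q s v by (smt (verit) mult_left_mono mult_right_mono zero_le_mult_iff)
  also have "\<dots> = T * v * (1 - s/c) + 1 + s * v"
    using cpos by (simp add: field_simps)
  also have "1 - s/c = (c - s)/c" using cpos by (simp add: diff_divide_distrib)
  also have "c - s = 1/\<rho>" by (simp add: c_def)
  also have "T * v * ((1/\<rho>)/c) = T * v / (\<rho> * c)" by simp
  also have "T * v / (\<rho> * c) + 1 + s * v \<le> T*R/(\<rho> * s) + 1 + s*R"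
    using cpos T v vR rho s by (intro add_mono frac_le mult_mono) auto
  finally show "real (nat \<lceil>T * v\<rceil> - q * nat \<lceil>s * v\<rceil>) \<le> T*R/(\<rho> * s) + 1 + s*R" .
qed

lemma ceiling_division:
  fixes s T \<rho> v R :: real
  assumes s: "s \<ge> 1" and T: "T \<ge> 1" and rho: "\<rho> > 0" and v0: "v \<ge> 0"
    and vr: "v > 0 \<Longrightarrow> \<rho> \<le> v" and vR: "v \<le> R"
  defines "q \<equiv> nat \<lfloor>T/(s + 1/\<rho>)\<rfloor>"
  shows "q * nat \<lceil>s * v\<rceil> \<le> nat \<lceil>T * v\<rceil>"
    and "real (nat \<lceil>T * v\<rceil> - q * nat \<lceil>s * v\<rceil>) \<le> T*R/(\<rho> * s) + 1 + s*R"
proof -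
  have "q * nat \<lceil>s * v\<rceil> \<le> nat \<lceil>T * v\<rceil>
      \<and> real (nat \<lceil>T * v\<rceil> - q * nat \<lceil>s * v\<rceil>) \<le> T*R/(\<rho> * s) + 1 + s*R"
  proof (cases "v = 0")
    case True
    then show ?thesis using s T rho vR by (simp add: zero_le_mult_iff)
  next
    case False
    with v0 vr have "\<rho> \<le> v" by simp
    from ceiling_division_pos[OF s T rho this vR] show ?thesis unfolding q_def by blast
  qed
  then show "q * nat \<lceil>s * v\<rceil> \<le> nat \<lceil>T * v\<rceil>"
    and "real (nat \<lceil>T * v\<rceil> - q * nat \<lceil>s * v\<rceil>) \<le> T*R/(\<rho> * s) + 1 + s*R" by blast+
qed

lemma ceil_vec_decomposition:
  fixes r :: "real^'n"
  assumes r0: "\<forall>i. r$i \<ge> 0" and rho: "\<rho> > 0" and rr: "\<And>i. r$i > 0 \<Longrightarrow> \<rho> \<le> r$i"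
    and rR: "\<And>i. r$i \<le> R" and s: "s \<ge> 1" and T: "T \<ge> 1"
  obtains m where "ceil_vec T r = nat \<lfloor>T/(s + 1/\<rho>)\<rfloor> *s ceil_vec s r + m"
    and "\<And>i. real (m$i) \<le> T*R/(\<rho> * s) + 1 + s*R"
proof
  define q where "q = nat \<lfloor>T/(s + 1/\<rho>)\<rfloor>"
  note co = ceiling_division[OF s T rho, of "r$i" R for i, folded q_def]
  show "ceil_vec T r = q *s ceil_vec s r + (\<chi> i. nat \<lceil>T*r$i\<rceil> - q * nat \<lceil>s*r$i\<rceil>)"
    using co(1) r0 rr rR by (auto simp: vec_eq_iff ceil_vec_def)
  show "real ((\<chi> i. nat \<lceil>T*r$i\<rceil> - q * nat \<lceil>s*r$i\<rceil>) $ i) \<le> T*R/(\<rho> * s) + 1 + s*R" for i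
    using co(2) r0 rr rR by simp
qed

lemma ceil_quotient_approx_mono:
  fixes f :: "nat^'n \<Rightarrow> real" and r :: "real^'n"
  assumes nonneg: "\<And>k. f k \<ge> 0" and subadd: "subadditive f"
    and r0: "\<forall>i. r$i \<ge> 0" and rho: "\<rho> > 0" and rr: "\<And>i. r$i > 0 \<Longrightarrow> \<rho> \<le> r$i"
    and rR: "\<And>i. r$i \<le> R" and s: "s \<ge> 1" and T: "T \<ge> 1"
  defines "C \<equiv> \<Sum>i\<in>UNIV. f (axis i 1)"
  shows "f (ceil_vec T r) / T \<le> f (ceil_vec s r) / s + (C*R/\<rho>) / s + (f 0 + C*(1 + s*R)) / T"
proof -
  define q where "q = nat \<lfloor>T/(s + 1/\<rho>)\<rfloor>"
  define M where "M = T*R/(\<rho> * s) + 1 + s*R"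
  obtain m where dec: "ceil_vec T r = q *s ceil_vec s r + m" and m: "\<And>i. real (m$i) \<le> M"
    using ceil_vec_decomposition[OF r0 rho rr rR s T] unfolding q_def M_def by metis
  have "real q \<le> T/(s + 1/\<rho>)" using s T rho unfolding q_def by simp
  also have "\<dots> \<le> T/s" using s T rho by (simp add: frac_le add_pos_pos)
  finally have q: "real q * f (ceil_vec s r) \<le> (T/s) * f (ceil_vec s r)"
    using nonneg by (rule mult_right_mono)
  have "f (ceil_vec T r) \<le> real q * f (ceil_vec s r) + f m"
    unfolding dec by (rule subadditive_scale[OF subadd])
  also have "f m \<le> f 0 + M * C"
    unfolding C_def using subadditive_uniform_bound[OF subadd nonneg m] .
  finally have "f (ceil_vec T r) \<le> (T/s) * f (ceil_vec s r) + (f 0 + M * C)"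
    using q by linarith
  then have "f (ceil_vec T r) / T \<le> ((T/s) * f (ceil_vec s r) + (f 0 + M * C)) / T"
    using T by (simp add: divide_right_mono)
  also have "\<dots> = f (ceil_vec s r) / s + (C*R/\<rho>) / s + (f 0 + C*(1 + s*R)) / T"
    using T s rho unfolding M_def by (simp add: field_simps)
  finally show ?thesis .
qed

text \<open>This is the continuous analogue of Fekete's lemma.\<close>
lemma tendsto_of_approx_mono:
  fixes h B :: "real \<Rightarrow> real"
  assumes lower: "\<And>t. t \<ge> 1 \<Longrightarrow> h t \<ge> b" and A: "A \<ge> 0"
    and approx: "\<And>s T. s \<ge> 1 \<Longrightarrow> T \<ge> 1 \<Longrightarrow> h T \<le> h s + A/s + B s / T"
  shows "(h \<longlongrightarrow> Inf ((\<lambda>s. h s + A/s) ` {1..})) at_top"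
proof (rule tendstoI)
  define L where "L = Inf ((\<lambda>s. h s + A/s) ` {1..})"
  have bdd: "bdd_below ((\<lambda>s. h s + A/s) ` {1..})"
    by (rule bdd_belowI[of _ b]) (use lower A in \<open>auto intro: add_increasing2\<close>)
  have L_le: "L \<le> h t + A/t" if "t \<ge> 1" for t
    unfolding L_def by (rule cInf_lower[OF _ bdd]) (use that in auto)
  have div_0: "((\<lambda>T. c / T) \<longlongrightarrow> 0) at_top" for c :: real
    by (rule tendsto_divide_0[OF tendsto_const filterlim_at_top_imp_at_infinity[OF filterlim_ident]])
  fix e :: real assume e: "e > 0"
  have "L < L + e/2" using e by simp
  then obtain s where s: "s \<ge> 1" "h s + A/s < L + e/2"
    using cInf_less_iff[OF _ bdd, of "L + e/2"] unfolding L_def by auto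
  have "eventually (\<lambda>T. T \<ge> 1 \<and> B s / T < e/2 \<and> A / T < e/2) at_top"
    using eventually_ge_at_top order_tendstoD(2)[OF div_0, of "e/2"] e
    by (intro eventually_conj) auto
  then show "eventually (\<lambda>T. dist (h T) L < e) at_top"
  proof eventually_elim
    case (elim T)
    then have "h T \<le> h s + A/s + B s / T" "L \<le> h T + A/T" using approx[OF s(1)] L_le by auto
    with elim s(2) have "h T - L < e" "L - h T < e" by linarith+
    then show ?case by (simp add: dist_real_def abs_less_iff)
  qed
qed

lemma ceil_quotient_converges:
  fixes f :: "nat^'n \<Rightarrow> real" and r :: "real^'n"
  assumes nonneg: "\<And>k. f k \<ge> 0" and subadd: "subadditive f" and r0: "\<forall>i. r$i \<ge> 0"
  shows "\<exists>L. ((\<lambda>t::real. ceil_ext f (t *\<^sub>R r) / t) \<longlongrightarrow> L) at_top"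
proof -
  define C where "C = (\<Sum>i\<in>UNIV. f (axis i 1))"
  define R where "R = (\<Sum>i\<in>UNIV. r$i)"
  define \<rho> where "\<rho> = (if {i. r$i > 0} = {} then 1 else Min ((\<lambda>i. r$i) ` {i. r$i > 0}))"
  have rR: "r$i \<le> R" for i unfolding R_def using r0 by (intro member_le_sum) auto
  have rho: "\<rho> > 0" unfolding \<rho>_def by auto
  have rr: "r$i > 0 \<Longrightarrow> \<rho> \<le> r$i" for i unfolding \<rho>_def by auto
  have "C \<ge> 0" "R \<ge> 0" unfolding C_def R_def using nonneg r0 by (simp_all add: sum_nonneg)
  then have A: "C*R/\<rho> \<ge> 0" using rho by simp
  have "((\<lambda>t. f (ceil_vec t r) / t)
          \<longlongrightarrow> Inf ((\<lambda>s. f (ceil_vec s r) / s + C*R/\<rho> / s) ` {1..})) at_top"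
    by (rule tendsto_of_approx_mono[where b = 0 and B = "\<lambda>s. f 0 + C*(1 + s*R)", OF _ A
          ceil_quotient_approx_mono[OF nonneg subadd r0 rho rr rR, folded C_def]])
      (use nonneg in auto)
  then show ?thesis unfolding ceil_ext_scaleR by blast
qed

lemma fhat_eqI:
  "((\<lambda>t::real. ceil_ext f (t *\<^sub>R r) / t) \<longlongrightarrow> L) at_top \<Longrightarrow> fhat f r = L"
  unfolding fhat_def by (rule tendsto_Lim) simp_all

text \<open>Positive homogeneity: the substitution \<open>t \<mapsto> \<alpha> t\<close> for \<open>\<alpha> > 0\<close>; for \<open>\<alpha> = 0\<close>
  the quotient is \<open>f(0)/t \<rightarrow> 0\<close>.\<close>
lemma ceil_quotient_homogeneous:
  fixes f :: "nat^'n \<Rightarrow> real" and r :: "real^'n" and \<alpha> :: real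
  assumes lim: "((\<lambda>t::real. ceil_ext f (t *\<^sub>R r) / t) \<longlongrightarrow> L) at_top" and "\<alpha> \<ge> 0"
  shows "((\<lambda>t::real. ceil_ext f (t *\<^sub>R (\<alpha> *\<^sub>R r)) / t) \<longlongrightarrow> \<alpha> * L) at_top"
proof (cases "\<alpha> = 0")
  case True
  have "((\<lambda>t::real. f 0 / t) \<longlongrightarrow> 0) at_top"
    by (rule tendsto_divide_0[OF tendsto_const filterlim_at_top_imp_at_infinity[OF filterlim_ident]])
  then show ?thesis using True by (simp add: ceil_ext_def zero_vec_def)
next
  case False
  with \<open>\<alpha> \<ge> 0\<close> have \<alpha>: "\<alpha> > 0" by simp
  have "filterlim (\<lambda>t::real. \<alpha> * t) at_top at_top"
    by (rule filterlim_tendsto_pos_mult_at_top[OF tendsto_const \<alpha> filterlim_ident])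
  from tendsto_mult[OF tendsto_const[of \<alpha>] filterlim_compose[OF lim this]]
  show ?thesis using \<alpha> by (simp add: mult.commute)
qed

theorem mainTheorem9:
  fixes f :: "nat^'n \<Rightarrow> real"
  assumes nonneg: "\<And>k. f k \<ge> 0"
    and subadd: "subadditive f"
  shows "\<forall>r::real^'n. (\<forall>i. r $ i \<ge> 0) \<longrightarrow>
           ((\<lambda>t::real. ceil_ext f (t *\<^sub>R r) / t) \<longlongrightarrow> fhat f r) at_top
           \<and> (\<forall>\<alpha>::real. \<alpha> \<ge> 0 \<longrightarrow> fhat f (\<alpha> *\<^sub>R r) = \<alpha> * fhat f r)"
proof (intro allI impI conjI)
  fix r :: "real^'n" assume "\<forall>i. r $ i \<ge> 0"
  then obtain L where lim: "((\<lambda>t::real. ceil_ext f (t *\<^sub>R r) / t) \<longlongrightarrow> L) at_top"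
    using ceil_quotient_converges[OF nonneg subadd] by blast
  then have fr: "fhat f r = L" by (rule fhat_eqI)
  show "((\<lambda>t::real. ceil_ext f (t *\<^sub>R r) / t) \<longlongrightarrow> fhat f r) at_top"
    using lim fr by simp
  fix \<alpha> :: real assume "\<alpha> \<ge> 0"
  show "fhat f (\<alpha> *\<^sub>R r) = \<alpha> * fhat f r"
    using fhat_eqI[OF ceil_quotient_homogeneous[OF lim \<open>\<alpha> \<ge> 0\<close>]] fr by simp
qed

end
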